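(* The map $G$ has sensitive dependence on initial conditions on $(\mathcal{X},d)$, with a constant of sensitivity at least $2^{\mathsf{N}-1}$: there is $\delta\ge 2^{\mathsf{N}-1}$ such that for every $x\in\mathcal{X}$ and every neighborhood $V$ of $x$ there exist $y\in V$ and $n\ge0$ with $d(G^n(x),G^n(y))>\delta$.
   Context: Fix an integer $\mathsf{N}\ge 1$ and write $\llbracket a;b\rrbracket=\{a,a+1,\dots,b\}$. Let $f:\mathbb{Z}/4\mathbb{Z}\to\mathbb{Z}/4\mathbb{Z}$, $f(x)=x+1 \pmod 4$, with $f^{-1}(x)=x-1\pmod 4$ and $f^0=\mathrm{id}$. Let $\mathrm{sign}(x)=1$ if $x>0$, $0$ if $x=0$, $-1$ if $x<0$. For $k\in\llbracket -\mathsf{N};\mathsf{N}\rrbracket$ define $f_k:(\mathbb{Z}/4\mathbb{Z})^{\mathsf{N}}\to(\mathbb{Z}/4\mathbb{Z})^{\mathsf{N}}$ by $f_k(C_1,\dots,C_{\mathsf{N}})=(C_1,\dots,C_{|k|-1},f^{\mathrm{sign}(k)}(C_{|k|}),\dots,f^{\mathrm{sign}(k)}(C_{\mathsf{N}}))$ (so $f_0$ is the identity). Folding sequences are $F=(F^j)_{j\in\mathbb{N}}\in\llbracket -\mathsf{N};\mathsf{N}\rrbracket^{\mathbb{N}}$; let $i(F)=F^0$ and let $\sigma$ be the shift, $\sigma((F^j)_{j})=(F^{j+1})_{j}$. A finite sequence $(k_1,\dots,k_n)$ is identified with $(k_1,\dots,k_n,0,0,\dots)$. On $\check{\mathcal{X}}=(\mathbb{Z}/4\mathbb{Z})^{\mathsf{N}}\times\llbracket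 -\mathsf{N};\mathsf{N}\rrbracket^{\mathbb{N}}$ define $G((C,F))=(f_{i(F)}(C),\sigma(F))$. SAW requirement: for $C\in(\mathbb{Z}/4\mathbb{Z})^{\mathsf{N}}$ let $p(C)=(X_0,\dots,X_{\mathsf{N}})\in(\mathbb{Z}^2)^{\mathsf{N}+1}$ with $X_0=(0,0)$ and $X_i=X_{i-1}+v(C_i)$, where $v(0)=(1,0)$, $v(1)=(0,-1)$, $v(2)=(-1,0)$, $v(3)=(0,1)$. $C$ satisfies the SAW requirement iff the points $X_0,\dots,X_{\mathsf{N}}$ are pairwise distinct. Let $\mathfrak{C}_{\mathsf{N}}$ be the set of $C\in(\mathbb{Z}/4\mathbb{Z})^{\mathsf{N}}$ for which there exist $n\ge1$ and $k_1,\dots,k_n\in\llbracket -\mathsf{N};\mathsf{N}\rrbracket$ such that $C$ is the first component of $G^n(((0,\dots,0),(k_1,\dots,k_n)))$ and, for every $i\le n$, the first component of $G^i(((0,\dots,0),(k_1,\dots,k_n)))$ satisfies the SAW requirement. Let $\mathcal{X}=\mathfrak{C}_{\mathsf{N}}\times\llbracket -\mathsf{N};\mathsf{N}\rrbracket^{\mathbb{N}}$ with metric $d((C,F),(\check C,\check F))=d_C(C,\check C)+d_F(F,\check F)$, where $d_C(C,\check C)=\sum_{k=1}^{\mathsf{N}}\delta(C_k,\check C_k)2^{\mathsf{N}-k}$ ($\delta(a,b)=0$ if $a=b$, $1$ otherwise) and $d_F(F,\check F)=\frac{9}{2\mathsf{N}}\sum_{k=0}^{\infty}\frac{|F^k-\check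 F^k|}{10^{k+1}}$. The paper regards $G$ as a self-map of $\mathcal{X}$. *)

theory Defs
  imports Complex_Main
begin

text \<open>Configurations \<open>C \<in> (Z/4Z)^N\<close> are lists of naturals of length N with entries < 4;
  entry \<open>C_k\<close> (1-based) is \<open>C ! (k-1)\<close>.\<close>

definition fmap :: "int \<Rightarrow> nat list \<Rightarrow> nat list" where
  "fmap k C = map (\<lambda>i. if k \<noteq> 0 \<and> nat \<bar>k\<bar> \<le> i + 1
                        then (C ! i + (if k > 0 then 1 else 3)) mod 4 else C ! i)
                  [0..<length C]"

definition Gmap :: "nat list \<times> (nat \<Rightarrow> int) \<Rightarrow> nat list \<times> (nat \<Rightarrow> int)" where
  "Gmap x = (fmap (snd x 0) (fst x), (\<lambda>j. snd x (Suc j)))"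

definition fold_seq :: "int list \<Rightarrow> (nat \<Rightarrow> int)" where
  "fold_seq ks = (\<lambda>j. if j < length ks then ks ! j else 0)"

definition vstep :: "nat \<Rightarrow> int \<times> int" where
  "vstep c = (if c = 0 then (1, 0) else if c = 1 then (0, -1)
              else if c = 2 then (-1, 0) else (0, 1))"

definition path_pt :: "nat list \<Rightarrow> nat \<Rightarrow> int \<times> int" where
  "path_pt C i = ((\<Sum>j<i. fst (vstep (C ! j))), (\<Sum>j<i. snd (vstep (C ! j))))"

definition saw :: "nat list \<Rightarrow> bool" where
  "saw C \<longleftrightarrow> distinct (map (path_pt C) [0..<length C + 1])"

definition CN :: "nat \<Rightarrow> nat list set" where
  "CN N = {C. \<exists>ks. length ks \<ge> 1 \<and> set ks \<subseteq> {- int N..int N} \<and>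
              C = fst ((Gmap ^^ length ks) (replicate N 0, fold_seq ks)) \<and>
              (\<forall>i\<in>{1..length ks}. saw (fst ((Gmap ^^ i) (replicate N 0, fold_seq ks))))}"

definition XN :: "nat \<Rightarrow> (nat list \<times> (nat \<Rightarrow> int)) set" where
  "XN N = {(C, F). C \<in> CN N \<and> (\<forall>j. F j \<in> {- int N..int N})}"

definition dC :: "nat \<Rightarrow> nat list \<Rightarrow> nat list \<Rightarrow> real" where
  "dC N C C' = (\<Sum>k=1..N. (if C ! (k - 1) = C' ! (k - 1) then 0 else 1) * 2 ^ (N - k))"

definition dF :: "nat \<Rightarrow> (nat \<Rightarrow> int) \<Rightarrow> (nat \<Rightarrow> int) \<Rightarrow> real" where
  "dF N F F' = 9 / (2 * real N) * (\<Sum>k. real_of_int \<bar>F k - F' k\<bar> / 10 ^ (k + 1))"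

definition dX :: "nat \<Rightarrow> nat list \<times> (nat \<Rightarrow> int) \<Rightarrow> nat list \<times> (nat \<Rightarrow> int) \<Rightarrow> real" where
  "dX N x y = dC N (fst x) (fst y) + dF N (snd x) (snd y)"

definition is_nbhd :: "nat \<Rightarrow> (nat list \<times> (nat \<Rightarrow> int)) set \<Rightarrow> nat list \<times> (nat \<Rightarrow> int) \<Rightarrow> bool" where
  "is_nbhd N V x \<longleftrightarrow> (\<exists>\<epsilon>>0. {y \<in> XN N. dX N x y < \<epsilon>} \<subseteq> V)"

end

theory Submission
  imports Defs
begin

text \<open>The metric \<open>dF\<close> barely sees folds far in the future, so changing every fold
  from step \<open>m\<close> onward moves a point by at most \<open>(1/10)^m\<close>. If the fold at step \<open>m\<close> is replaced
  by one that acts differently on the first digit, then after \<open>m + 1\<close> steps the two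
  configurations differ in \<open>C\<^sub>1\<close>, which alone contributes \<open>2^(N-1)\<close> to \<open>dC\<close>, while the
  remaining folding sequences still differ, so \<open>dF > 0\<close> and the distance exceeds \<open>2^(N-1)\<close>.\<close>

lemma length_fmap [simp]: "length (fmap k C) = length C"
  by (simp add: fmap_def)

lemma nth_fmap:
  "i < length C \<Longrightarrow> fmap k C ! i =
     (if k \<noteq> 0 \<and> nat \<bar>k\<bar> \<le> i + 1 then (C ! i + (if k > 0 then 1 else 3)) mod 4 else C ! i)"
  by (simp add: fmap_def)

lemma snd_funpow_Gmap: "snd ((Gmap ^^ n) x) = (\<lambda>j. snd x (j + n))"
  by (induction n) (auto simp: Gmap_def)

lemma fst_funpow_Gmap_Suc: "fst ((Gmap ^^ Suc n) x) = fmap (snd x n) (fst ((Gmap ^^ n) x))"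
  by (simp add: Gmap_def snd_funpow_Gmap)

lemma length_fst_funpow_Gmap: "length (fst ((Gmap ^^ n) x)) = length (fst x)"
  by (induction n) (simp_all only: fst_funpow_Gmap_Suc length_fmap funpow_0)

lemma fst_funpow_Gmap_cong:
  "(\<And>j. j < n \<Longrightarrow> F j = F' j) \<Longrightarrow> fst ((Gmap ^^ n) (C, F)) = fst ((Gmap ^^ n) (C, F'))"
  by (induction n) (simp_all only: fst_funpow_Gmap_Suc snd_conv funpow_0 less_Suc_eq, auto)

lemma length_CN: "C \<in> CN N \<Longrightarrow> length C = N"
  unfolding CN_def using length_fst_funpow_Gmap by auto

definition other_fold :: "int \<Rightarrow> int" where
  "other_fold k = (if k = 1 then -1 else 1)"

lemma other_fold_neq: "other_fold k \<noteq> k"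
  by (simp add: other_fold_def)

lemma other_fold_range: "1 \<le> N \<Longrightarrow> other_fold k \<in> {- int N..int N}"
  by (auto simp: other_fold_def)

lemma nth_0_fmap:
  assumes "C \<noteq> []"
  shows "fmap k C ! 0 = (if k = 1 then (C ! 0 + 1) mod 4 else if k = -1 then (C ! 0 + 3) mod 4 else C ! 0)"
proof -
  have "(k \<noteq> 0 \<and> nat \<bar>k\<bar> \<le> 1) \<longleftrightarrow> k = 1 \<or> k = -1"
    by auto
  then show ?thesis
    using assms by (auto simp: nth_fmap)
qed

lemma fmap_other_fold_head:
  assumes "C \<noteq> []"
  shows "fmap k C ! 0 \<noteq> fmap (other_fold k) C ! 0"
  using assms by (simp add: nth_0_fmap other_fold_def) presburger

lemma summable_weighted_diff:
  assumes "\<And>k. real_of_int \<bar>F k - F' k\<bar> \<le> B"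
  shows "summable (\<lambda>k. real_of_int \<bar>F k - F' k\<bar> / 10 ^ (k + 1))"
proof (rule summable_comparison_test)
  have "norm (real_of_int \<bar>F k - F' k\<bar> / 10 ^ (k + 1)) \<le> B / 10 ^ (k + 1)" for k
    using divide_right_mono[OF assms[of k], of "10 ^ (k + 1)"] by simp
  then show "\<exists>M. \<forall>k\<ge>M. norm (real_of_int \<bar>F k - F' k\<bar> / 10 ^ (k + 1)) \<le> B / 10 ^ (k + 1)"
    by blast
  show "summable (\<lambda>k. B / 10 ^ (k + 1) :: real)"
    using summable_mult[OF summable_geometric[of "1/10 :: real"], of "B / 10"]
    by (simp add: power_one_over)
qed

lemma dF_le_of_eq_below:
  assumes "1 \<le> N"
    and eq: "\<And>j. j < m \<Longrightarrow> F j = F' j"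
    and bound: "\<And>j. real_of_int \<bar>F j - F' j\<bar> \<le> 2 * real N"
  shows "dF N F F' \<le> (1/10) ^ m"
proof -
  let ?a = "\<lambda>k. real_of_int \<bar>F k - F' k\<bar> / 10 ^ (k + 1)"
  have summable: "summable ?a"
    using bound by (rule summable_weighted_diff)
  define c where "c = 2 * real N * (1/10) ^ m"
  have "(\<lambda>k. c / 10 * (1/10) ^ k) sums (c / 10 * (1 / (1 - 1/10)))"
    by (intro sums_mult geometric_sums) simp
  then have tail: "(\<lambda>k. c / 10 * (1/10) ^ k) sums (c / 9)"
    by simp
  have "suminf ?a = (\<Sum>k. ?a (k + m))"
    using suminf_split_initial_segment[OF summable, where k = m] eq by simp
  also have "\<dots> \<le> c / 9"
  proof (rule sums_le[OF _ summable_sums tail])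
    show "summable (\<lambda>k. ?a (k + m))"
      using summable by (rule summable_ignore_initial_segment)
    show "?a (k + m) \<le> c / 10 * (1/10) ^ k" for k
      using divide_right_mono[OF bound[of "k + m"], of "10 ^ (k + m + 1)"]
      by (simp add: c_def power_add power_one_over field_simps)
  qed
  finally show ?thesis
    using assms(1) unfolding dF_def c_def by (simp add: field_simps)
qed

lemma dF_pos_of_neq:
  assumes "1 \<le> N" "F j \<noteq> F' j" "\<And>k. real_of_int \<bar>F k - F' k\<bar> \<le> B"
  shows "0 < dF N F F'"
proof -
  have "0 < (\<Sum>k. real_of_int \<bar>F k - F' k\<bar> / 10 ^ (k + 1))"
    by (rule suminf_pos2[OF summable_weighted_diff[OF assms(3)], where i = j]) (use assms(2) in auto)
  then show ?thesis
    using assms(1) unfolding dF_def by simp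
qed

lemma dC_ge_of_head_neq:
  assumes "1 \<le> N" "C ! 0 \<noteq> C' ! 0"
  shows "2 ^ (N - 1) \<le> dC N C C'"
proof -
  have "(if C ! (1 - 1) = C' ! (1 - 1) then 0 else 1) * 2 ^ (N - 1)
          \<le> (\<Sum>k=1..N. (if C ! (k - 1) = C' ! (k - 1) then 0 else 1) * (2::real) ^ (N - k))"
    using assms(1) by (intro member_le_sum) auto
  then show ?thesis
    using assms(2) by (simp add: dC_def)
qed

definition perturb_from :: "nat \<Rightarrow> (nat \<Rightarrow> int) \<Rightarrow> nat \<Rightarrow> int" where
  "perturb_from m F j = (if j < m then F j else other_fold (F j))"

lemma perturb_from_in_XN:
  assumes "1 \<le> N" "(C, F) \<in> XN N"
  shows "(C, perturb_from m F) \<in> XN N"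
  using assms other_fold_range by (auto simp: XN_def perturb_from_def)

lemma perturb_from_diff_bound:
  assumes "1 \<le> N" "(C, F) \<in> XN N"
  shows "real_of_int \<bar>F j - perturb_from m F j\<bar> \<le> 2 * real N"
proof -
  have "F j \<in> {- int N..int N}"
    using assms(2) by (simp add: XN_def)
  then have "\<bar>F j - perturb_from m F j\<bar> \<le> 2 * int N"
    using other_fold_range[OF assms(1), of "F j"] by (auto simp: perturb_from_def)
  then show ?thesis
    by (metis of_int_le_iff of_int_mult of_int_numeral of_int_of_nat_eq)
qed

lemma dX_perturb_from_le:
  assumes "1 \<le> N" "(C, F) \<in> XN N"
  shows "dX N (C, F) (C, perturb_from m F) \<le> (1/10) ^ m"
proof -
  have "dF N F (perturb_from m F) \<le> (1/10) ^ m"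
    using perturb_from_diff_bound[OF assms]
    by (intro dF_le_of_eq_below[OF assms(1)]) (auto simp: perturb_from_def)
  then show ?thesis
    by (simp add: dX_def dC_def)
qed

lemma dX_funpow_perturb_from_gt:
  assumes "1 \<le> N" "(C, F) \<in> XN N"
  shows "2 ^ (N - 1) < dX N ((Gmap ^^ Suc m) (C, F)) ((Gmap ^^ Suc m) (C, perturb_from m F))"
proof -
  let ?F' = "perturb_from m F"
  define D where "D = fst ((Gmap ^^ m) (C, F))"
  have "fst ((Gmap ^^ m) (C, ?F')) = D"
    unfolding D_def by (rule fst_funpow_Gmap_cong[symmetric]) (simp add: perturb_from_def)
  then have fst_y: "fst ((Gmap ^^ Suc m) (C, ?F')) = fmap (other_fold (F m)) D"
    unfolding fst_funpow_Gmap_Suc snd_conv by (simp add: perturb_from_def)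
  have fst_x: "fst ((Gmap ^^ Suc m) (C, F)) = fmap (F m) D"
    unfolding fst_funpow_Gmap_Suc snd_conv D_def ..
  have "length D = N"
    using assms(2) length_fst_funpow_Gmap length_CN by (simp add: D_def XN_def)
  with assms(1) have "D \<noteq> []"
    by auto
  then have "2 ^ (N - 1) \<le> dC N (fmap (F m) D) (fmap (other_fold (F m)) D)"
    using assms(1) fmap_other_fold_head by (intro dC_ge_of_head_neq)
  moreover have "0 < dF N (\<lambda>j. F (j + Suc m)) (\<lambda>j. ?F' (j + Suc m))"
  proof (rule dF_pos_of_neq[OF assms(1), of _ 0])
    show "F (0 + Suc m) \<noteq> ?F' (0 + Suc m)"
      by (simp add: perturb_from_def other_fold_neq[symmetric])
    show "real_of_int \<bar>F (k + Suc m) - ?F' (k + Suc m)\<bar> \<le> 2 * real N" for k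
      by (rule perturb_from_diff_bound[OF assms])
  qed
  ultimately show ?thesis
    unfolding dX_def fst_x fst_y snd_funpow_Gmap by simp
qed

theorem mainTheorem6:
  fixes N :: nat
  assumes "N \<ge> 1"
  shows "\<exists>\<delta>::real. \<delta> \<ge> 2 ^ (N - 1) \<and>
           (\<forall>x\<in>XN N. \<forall>V. is_nbhd N V x \<longrightarrow>
              (\<exists>y\<in>V \<inter> XN N. \<exists>n::nat. dX N ((Gmap ^^ n) x) ((Gmap ^^ n) y) > \<delta>))"
proof (intro exI[of _ "2 ^ (N - 1)"] conjI order_refl ballI allI impI)
  fix x V
  assume x: "x \<in> XN N" and "is_nbhd N V x"
  then obtain \<epsilon> where "\<epsilon> > 0" and ball: "{y \<in> XN N. dX N x y < \<epsilon>} \<subseteq> V"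
    by (auto simp: is_nbhd_def)
  then obtain m where m: "(1/10) ^ m < \<epsilon>"
    using real_arch_pow_inv[of \<epsilon> "1/10"] by auto
  obtain C F where xCF: "x = (C, F)"
    by (cases x)
  let ?y = "(C, perturb_from m F)"
  have "dX N x ?y < \<epsilon>"
    using dX_perturb_from_le[OF assms] x m unfolding xCF by (meson le_less_trans)
  then have "?y \<in> V \<inter> XN N"
    using ball perturb_from_in_XN[OF assms] x unfolding xCF by blast
  moreover have "2 ^ (N - 1) < dX N ((Gmap ^^ Suc m) x) ((Gmap ^^ Suc m) ?y)"
    using dX_funpow_perturb_from_gt[OF assms] x unfolding xCF by blast
  ultimately show "\<exists>y\<in>V \<inter> XN N. \<exists>n. 2 ^ (N - 1) < dX N ((Gmap ^^ n) x) ((Gmap ^^ n) y)"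
    by blast
qed

end
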